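(* Let $\mathcal{D}\subseteq\mathbb{R}^n$, let $f_{\mathrm{cl}}:\mathcal{D}\to\mathbb{R}^n$ be locally Lipschitz, and let $h:\mathcal{D}\to\mathbb{R}$ be locally Lipschitz with $h(\mathcal{D})\subseteq[h_{\min},h_{\max}]$ for some constants $h_{\min}<0<h_{\max}$. Let $S=\{x\in\mathcal{D}: h(x)\ge 0\}$. For a function $\alpha:\mathbb{R}\to\mathbb{R}$, say that the barrier condition holds with $\alpha$ if $$\sup_{\zeta\in\partial^C h(x)}\zeta^\top f_{\mathrm{cl}}(x)\;\ge\;-\alpha\big(h(x)\big)\qquad\text{for all }x\in\mathcal{D}.$$ Then the following are equivalent: (a) There exists an extended class-$\mathcal{K}_\infty$ function $\alpha$ satisfying the one-sided slope bounds $$\limsup_{s\downarrow 0}\frac{\alpha(s)}{s}<\infty,\qquad \liminf_{s\uparrow 0}\frac{\alpha(s)}{s}>0,$$ such that the barrier condition holds with $\alpha$. (b) There exist constants $0<\alpha_1\le\alpha_m<\infty$ such that the barrier condition holds with the Leaky-ReLU function $$\overline{\alpha}(s)=\begin{cases}\alpha_m s,& s\ge 0,\\ \alpha_1 s,& s<0.\end{cases}$$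
   Context: $\partial^C h(x)$ denotes the Clarke generalized gradient of $h$ at $x$ (which reduces to $\{\nabla h(x)\}$ where $h$ is continuously differentiable). An extended class-$\mathcal{K}_\infty$ function is a continuous, strictly increasing function $\alpha:\mathbb{R}\to\mathbb{R}$ with $\alpha(0)=0$ and $\alpha(s)\to\pm\infty$ as $s\to\pm\infty$. *)

theory Defs
  imports "HOL-Analysis.Analysis"
begin

definition locally_lipschitz_on :: "('a::metric_space) set \<Rightarrow> ('a \<Rightarrow> 'b::metric_space) \<Rightarrow> bool" where
  "locally_lipschitz_on D f \<longleftrightarrow>
     (\<forall>x\<in>D. \<exists>U. open U \<and> x \<in> U \<and> (\<exists>L. L-lipschitz_on (U \<inter> D) f))"

definition clarke_dir_deriv ::
  "(real^'n) set \<Rightarrow> (real^'n \<Rightarrow> real) \<Rightarrow> real^'n \<Rightarrow> real^'n \<Rightarrow> ereal" where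
  "clarke_dir_deriv D h x v =
     Limsup (at (x, 0) within {(y, t). y \<in> D \<and> 0 < t \<and> y + t *\<^sub>R v \<in> D})
            (\<lambda>(y, t). ereal ((h (y + t *\<^sub>R v) - h y) / t))"

definition clarke_grad :: "(real^'n) set \<Rightarrow> (real^'n \<Rightarrow> real) \<Rightarrow> real^'n \<Rightarrow> (real^'n) set" where
  "clarke_grad D h x = {\<zeta>. \<forall>v. ereal (\<zeta> \<bullet> v) \<le> clarke_dir_deriv D h x v}"

definition ext_class_K_inf :: "(real \<Rightarrow> real) \<Rightarrow> bool" where
  "ext_class_K_inf \<alpha> \<longleftrightarrow> continuous_on UNIV \<alpha> \<and> strict_mono \<alpha> \<and> \<alpha> 0 = 0 \<and>
     filterlim \<alpha> at_top at_top \<and> filterlim \<alpha> at_bot at_bot"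

definition barrier_condition ::
  "(real^'n) set \<Rightarrow> (real^'n \<Rightarrow> real^'n) \<Rightarrow> (real^'n \<Rightarrow> real) \<Rightarrow> (real \<Rightarrow> real) \<Rightarrow> bool" where
  "barrier_condition D f h \<alpha> \<longleftrightarrow>
     (\<forall>x\<in>D. (SUP \<zeta>\<in>clarke_grad D h x. ereal (\<zeta> \<bullet> f x)) \<ge> ereal (- \<alpha> (h x)))"

definition leaky_relu :: "real \<Rightarrow> real \<Rightarrow> real \<Rightarrow> real" where
  "leaky_relu a1 am s = (if s \<ge> 0 then am * s else a1 * s)"

end

theory Submission
  imports Defs
begin

text \<open>The barrier condition only gets weaker when \<alpha> is increased on the range of h. Since h is
  bounded, an \<alpha> with finite right slope and positive left slope at 0 is dominated on that range
  by a leaky ReLU: near 0 by the slope bounds, away from 0 by monotonicity. Conversely a leaky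
  ReLU is itself an admissible \<alpha>.\<close>

lemma ext_class_K_inf_leaky_relu:
  assumes "0 < a1" and "a1 \<le> am"
  shows "ext_class_K_inf (leaky_relu a1 am)"
proof -
  have max_min: "leaky_relu a1 am = (\<lambda>s. am * max s 0 + a1 * min s 0)"
    by (auto simp: leaky_relu_def fun_eq_iff max_def min_def)
  have "strict_mono (leaky_relu a1 am)"
  proof (rule strict_monoI)
    fix x y :: real
    assume "x < y"
    then show "leaky_relu a1 am x < leaky_relu a1 am y"
      using assms unfolding leaky_relu_def
      by (smt (verit) mult_less_cancel_left_pos mult_right_mono)
  qed
  moreover have "filterlim (leaky_relu a1 am) at_top at_top"
  proof (rule filterlim_at_top_mono)
    show "filterlim (\<lambda>s::real. a1 * s) at_top at_top"
      using filterlim_tendsto_pos_mult_at_top[OF tendsto_const \<open>0 < a1\<close> filterlim_ident] .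
    show "\<forall>\<^sub>F s in at_top. a1 * s \<le> leaky_relu a1 am s"
      using eventually_ge_at_top[of "0::real"]
      by eventually_elim (use assms in \<open>auto simp: leaky_relu_def intro: mult_right_mono\<close>)
  qed
  moreover have "filterlim (leaky_relu a1 am) at_bot at_bot"
  proof (rule filterlim_cong[THEN iffD1, OF refl refl])
    show "filterlim (\<lambda>s::real. a1 * s) at_bot at_bot"
      using filterlim_tendsto_pos_mult_at_bot[OF tendsto_const \<open>0 < a1\<close> filterlim_ident] .
    show "\<forall>\<^sub>F s in at_bot. a1 * s = leaky_relu a1 am s"
      using eventually_le_at_bot[of "-1::real"]
      by eventually_elim (auto simp: leaky_relu_def)
  qed
  moreover have "continuous_on UNIV (leaky_relu a1 am)"
    unfolding max_min by (intro continuous_intros)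
  ultimately show ?thesis
    by (simp add: ext_class_K_inf_def leaky_relu_def)
qed

lemma Limsup_at_right_leaky_relu_slope:
  "Limsup (at_right 0) (\<lambda>s. ereal (leaky_relu a1 am s / s)) = ereal am"
proof -
  have "\<forall>\<^sub>F s in at_right 0. ereal (leaky_relu a1 am s / s) = ereal am"
    by (auto simp: eventually_at_right_field leaky_relu_def intro!: exI[of _ 1])
  from Limsup_eq[OF this] show ?thesis
    by (simp add: Limsup_const)
qed

lemma Liminf_at_left_leaky_relu_slope:
  "Liminf (at_left 0) (\<lambda>s. ereal (leaky_relu a1 am s / s)) = ereal a1"
proof -
  have "\<forall>\<^sub>F s in at_left 0. ereal (leaky_relu a1 am s / s) = ereal a1"
    by (auto simp: eventually_at_left_field leaky_relu_def intro!: exI[of _ "-1"])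
  from Liminf_eq[OF this] show ?thesis
    by (simp add: Liminf_const)
qed

lemma barrier_condition_antimono:
  assumes "barrier_condition D f h \<alpha>"
    and "\<And>x. x \<in> D \<Longrightarrow> \<alpha> (h x) \<le> \<beta> (h x)"
  shows "barrier_condition D f h \<beta>"
  unfolding barrier_condition_def
proof
  fix x
  assume "x \<in> D"
  then have "ereal (- \<beta> (h x)) \<le> ereal (- \<alpha> (h x))"
    using assms(2) by simp
  also have "\<dots> \<le> (SUP \<zeta>\<in>clarke_grad D h x. ereal (\<zeta> \<bullet> f x))"
    using assms(1) \<open>x \<in> D\<close> unfolding barrier_condition_def by blast
  finally show "ereal (- \<beta> (h x)) \<le> (SUP \<zeta>\<in>clarke_grad D h x. ereal (\<zeta> \<bullet> f x))" .
qed

lemma mono_slope_bound_at_right: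
  fixes \<alpha> :: "real \<Rightarrow> real"
  assumes "mono \<alpha>" and "\<alpha> 0 = 0"
    and "Limsup (at_right 0) (\<lambda>s. ereal (\<alpha> s / s)) < \<infinity>"
  shows "\<exists>M. \<forall>s\<in>{0<..s_max}. \<alpha> s \<le> M * s"
proof -
  obtain M where M: "Limsup (at_right 0) (\<lambda>s. ereal (\<alpha> s / s)) < ereal M"
    using ereal_dense2[OF assms(3)] by blast
  obtain b where "b > 0" and near: "\<And>s. 0 < s \<Longrightarrow> s < b \<Longrightarrow> \<alpha> s / s < M"
    using Limsup_lessD[OF M] unfolding eventually_at_right_field by auto
  have "\<alpha> s \<le> max M (\<alpha> s_max / b) * s" if "0 < s" "s \<le> s_max" for s
  proof (cases "s < b")
    case True
    then have "\<alpha> s \<le> M * s"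
      using near[OF \<open>0 < s\<close>] \<open>0 < s\<close> by (simp add: divide_less_eq)
    also have "\<dots> \<le> max M (\<alpha> s_max / b) * s"
      using \<open>0 < s\<close> by (intro mult_right_mono) auto
    finally show ?thesis .
  next
    case False
    have "0 \<le> \<alpha> s_max"
      using monoD[OF assms(1), of 0 s_max] that assms(2) by simp
    have "\<alpha> s \<le> \<alpha> s_max"
      using monoD[OF assms(1)] that by simp
    also have "\<dots> \<le> \<alpha> s_max * (s / b)"
      using mult_left_mono[of 1 "s / b", OF _ \<open>0 \<le> \<alpha> s_max\<close>] \<open>b > 0\<close> False by simp
    also have "\<dots> = (\<alpha> s_max / b) * s"
      by simp
    also have "\<dots> \<le> max M (\<alpha> s_max / b) * s"
      using \<open>0 < s\<close> by (intro mult_right_mono) auto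
    finally show ?thesis .
  qed
  then show ?thesis
    by (intro exI[of _ "max M (\<alpha> s_max / b)"]) auto
qed

lemma mono_slope_bound_at_left:
  fixes \<alpha> :: "real \<Rightarrow> real"
  assumes "mono \<alpha>"
    and "Liminf (at_left 0) (\<lambda>s. ereal (\<alpha> s / s)) > 0"
  shows "\<exists>c>0. \<forall>s\<in>{s_min..<0}. \<alpha> s \<le> c * s"
proof -
  obtain c where "0 < c" and c: "ereal c < Liminf (at_left 0) (\<lambda>s. ereal (\<alpha> s / s))"
    using ereal_dense2[OF assms(2)] by (metis ereal_less(2))
  obtain b where "b < 0" and near: "\<And>s. b < s \<Longrightarrow> s < 0 \<Longrightarrow> \<alpha> s / s > c"
    using less_LiminfD[OF c] unfolding eventually_at_left_field by auto
  define t where "t = b / 2"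
  define m where "m = min s_min t"
  have "t < 0" "b < t" "m < 0"
    using \<open>b < 0\<close> by (auto simp: t_def m_def)
  have "\<alpha> t < c * t"
    using near[OF \<open>b < t\<close> \<open>t < 0\<close>] \<open>t < 0\<close> by (simp add: less_divide_eq)
  then have "\<alpha> t < 0"
    using \<open>0 < c\<close> \<open>t < 0\<close> by (smt (verit) mult_pos_neg)
  \<comment> \<open>On \<open>[s_min, t]\<close>, \<open>\<alpha> \<le> \<alpha> t < 0\<close> lies below the line of slope \<open>\<alpha> t / m\<close>;
    \<open>m = min s_min t\<close> keeps this slope positive even if \<open>s_min \<ge> 0\<close>.\<close>
  define c' where "c' = min c (\<alpha> t / m)"
  have "0 < c'"
    using \<open>0 < c\<close> \<open>\<alpha> t < 0\<close> \<open>m < 0\<close> by (simp add: c'_def divide_neg_neg)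
  have "\<alpha> s \<le> c' * s" if "s_min \<le> s" "s < 0" for s
  proof (cases "t < s")
    case True
    then have "\<alpha> s < c * s"
      using near[of s] \<open>b < t\<close> \<open>s < 0\<close> by (simp add: less_divide_eq)
    also have "\<dots> \<le> c' * s"
      using \<open>s < 0\<close> by (intro mult_right_mono_neg) (auto simp: c'_def)
    finally show ?thesis
      by simp
  next
    case False
    have "\<alpha> s \<le> \<alpha> t"
      using monoD[OF assms(1)] False by simp
    also have "\<dots> = (\<alpha> t / m) * m"
      using \<open>m < 0\<close> by simp
    also have "\<dots> \<le> c' * m"
      using \<open>m < 0\<close> by (intro mult_right_mono_neg) (auto simp: c'_def)
    also have "\<dots> \<le> c' * s"
      using \<open>0 < c'\<close> that by (simp add: m_def)
    finally show ?thesis .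
  qed
  then show ?thesis
    using \<open>0 < c'\<close> by auto
qed

lemma leaky_relu_majorant:
  fixes \<alpha> :: "real \<Rightarrow> real"
  assumes "mono \<alpha>" and "\<alpha> 0 = 0"
    and "Limsup (at_right 0) (\<lambda>s. ereal (\<alpha> s / s)) < \<infinity>"
    and "Liminf (at_left 0) (\<lambda>s. ereal (\<alpha> s / s)) > 0"
  shows "\<exists>a1 am. 0 < a1 \<and> a1 \<le> am \<and> (\<forall>s\<in>{s_min..s_max}. \<alpha> s \<le> leaky_relu a1 am s)"
proof -
  obtain M where right: "\<forall>s\<in>{0<..s_max}. \<alpha> s \<le> M * s"
    using mono_slope_bound_at_right[OF assms(1-3)] by blast
  obtain a1 where "0 < a1" and left: "\<forall>s\<in>{s_min..<0}. \<alpha> s \<le> a1 * s"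
    using mono_slope_bound_at_left[OF assms(1,4)] by blast
  have "\<alpha> s \<le> leaky_relu a1 (max M a1) s" if "s \<in> {s_min..s_max}" for s
  proof -
    consider "s < 0" | "s = 0" | "0 < s"
      by linarith
    then show ?thesis
    proof cases
      case 3
      then have "\<alpha> s \<le> M * s"
        using right that by auto
      also have "\<dots> \<le> max M a1 * s"
        using 3 by (intro mult_right_mono) auto
      finally show ?thesis
        using 3 by (simp add: leaky_relu_def)
    qed (use left that assms(2) in \<open>auto simp: leaky_relu_def\<close>)
  qed
  then show ?thesis
    using \<open>0 < a1\<close> by (intro exI[of _ a1] exI[of _ "max M a1"]) auto
qed

theorem theorem1:
  fixes D :: "(real^'n) set"
    and f_cl :: "real^'n \<Rightarrow> real^'n"
    and h :: "real^'n \<Rightarrow> real"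
    and h_min h_max :: real
  assumes "locally_lipschitz_on D f_cl"
    and "locally_lipschitz_on D h"
    and "h_min < 0" and "0 < h_max"
    and "h ` D \<subseteq> {h_min..h_max}"
  shows "(\<exists>\<alpha>. ext_class_K_inf \<alpha>
             \<and> Limsup (at_right 0) (\<lambda>s. ereal (\<alpha> s / s)) < \<infinity>
             \<and> Liminf (at_left 0) (\<lambda>s. ereal (\<alpha> s / s)) > 0
             \<and> barrier_condition D f_cl h \<alpha>)
     \<longleftrightarrow> (\<exists>\<alpha>1 \<alpha>m. 0 < \<alpha>1 \<and> \<alpha>1 \<le> \<alpha>m
             \<and> barrier_condition D f_cl h (leaky_relu \<alpha>1 \<alpha>m))"
    (is "?admissible \<longleftrightarrow> ?leaky")
proof
  assume ?admissible
  then obtain \<alpha> where K: "ext_class_K_inf \<alpha>"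
    and slope_right: "Limsup (at_right 0) (\<lambda>s. ereal (\<alpha> s / s)) < \<infinity>"
    and slope_left: "Liminf (at_left 0) (\<lambda>s. ereal (\<alpha> s / s)) > 0"
    and barrier: "barrier_condition D f_cl h \<alpha>"
    by blast
  have "mono \<alpha>" and "\<alpha> 0 = 0"
    using K by (auto simp: ext_class_K_inf_def strict_mono_mono)
  then obtain a1 am where "0 < a1" "a1 \<le> am"
    and major: "\<forall>s\<in>{h_min..h_max}. \<alpha> s \<le> leaky_relu a1 am s"
    using leaky_relu_majorant[OF _ _ slope_right slope_left] by metis
  have "barrier_condition D f_cl h (leaky_relu a1 am)"
    using barrier by (rule barrier_condition_antimono) (use major assms(5) in auto)
  then show ?leaky
    using \<open>0 < a1\<close> \<open>a1 \<le> am\<close> by blast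
next
  assume ?leaky
  then obtain a1 am where "0 < a1" "a1 \<le> am" "barrier_condition D f_cl h (leaky_relu a1 am)"
    by blast
  then show ?admissible
    by (intro exI[of _ "leaky_relu a1 am"])
      (simp add: ext_class_K_inf_leaky_relu Limsup_at_right_leaky_relu_slope
        Liminf_at_left_leaky_relu_slope)
qed

end
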